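(* Let $T$ be a tiling class (with finite local complexity) and $\mathcal N$ an approximating sub-almost-groupoid of $\mathcal M_{II}$. Then the topology of $\Omega_{\mathcal N}$ is generated by the sets $U_u$ with $u$ a unit of $\mathcal N$.
   Context: A $d$-dimensional tiling is a countable family of bounded closed subsets of $\mathbb R^d$ (tiles, closures of interiors, finitely many decorations) covering $\mathbb R^d$ and overlapping only at boundaries, up to translation; finite local complexity: finitely many classes of pairs of touching tiles. $\mathcal M_{II}$: doubly pointed pattern classes $M_{xy}$; $M_{x_1x_2}\preceq N_{y_1y_2}$ if $N$ contains a translate of $M$ with $x_i$ on $y_i$; $c\vdash c'$ if some $L_{z_1z_2}$ and tile $z$ of $L$ satisfy $c\preceq L_{z_1z}$, $c'\preceq L_{zz_2}$, $cc'$ being the minimal such; $(M_{xy})^{-1}=M_{yx}$; units $M_{xx}$; $L(c)=cc^{-1}$, $R(c)=c^{-1}c$; $\mathrm{rad}(u)$ the largest $r$ such that $u$ covers all $r$-balls centred in its pointed tile. A sub-almost-groupoid is a subset closed under inverses and products of composable elements. Hull $\Omega$: completion of the pointed tilings $T_x$ under $d(\omega,\omega')=e^{-\sup\{r:M_r(\omega)=M_r(\omega')\}}$; $u\preceq\omega$ if $u$ occurs at $\omega$'s pointed tile; $U_u=\{\omega:u\preceq\omega\}$. An approximating sequence is a sequence of units $u_\nu$ with $u_1\cdots u_k\vdash u_{k+1}$ for all $k$ and $\mathrm{rad}(u_\nu)\to\infty$; its limit is the pointed tiling containing all $u_\nu$ at its pointed tile. $\Omega_{\mathcal N}=\bigcup_{c\in\mathcal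 N}U_{R(c)}$ with relative topology; $\mathcal N$ is approximating if every $\omega\in\Omega_{\mathcal N}$ is the limit of an approximating sequence with elements in $\mathcal N$. *)

theory Defs
  imports "HOL-Analysis.Analysis"
begin

text \<open>The ambient space R^d is an arbitrary Euclidean space 'a (d = DIM('a)).
  A tile is a subset of 'a together with a decoration (label) of type 'l.\<close>

type_synonym ('a,'l) tile = "'a set \<times> 'l"

definition tile_tr :: "'a::euclidean_space \<Rightarrow> ('a,'l) tile \<Rightarrow> ('a,'l) tile" where
  "tile_tr v t = ((\<lambda>p. v + p) ` fst t, snd t)"

definition is_tiling :: "('a::euclidean_space,'l) tile set \<Rightarrow> bool" where
  "is_tiling W \<longleftrightarrow>
     countable W \<and>
     (\<forall>t\<in>W. fst t \<noteq> {} \<and> bounded (fst t) \<and> closed (fst t) \<and> closure (interior (fst t)) = fst t) \<and>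
     finite (snd ` W) \<and>
     \<Union>(fst ` W) = UNIV \<and>
     (\<forall>t\<in>W. \<forall>t'\<in>W. t \<noteq> t' \<longrightarrow> interior (fst t) \<inter> interior (fst t') = {})"

text \<open>Finite local complexity: finitely many translation classes of pairs of touching tiles.\<close>
definition flc :: "('a::euclidean_space,'l) tile set \<Rightarrow> bool" where
  "flc W \<longleftrightarrow> (\<exists>F. finite F \<and>
     (\<forall>t\<in>W. \<forall>t'\<in>W. fst t \<inter> fst t' \<noteq> {} \<longrightarrow>
        (\<exists>(a,b)\<in>F. \<exists>v. t = tile_tr v a \<and> t' = tile_tr v b)))"

type_synonym ('a,'l) dpp = "('a,'l) tile set \<times> ('a,'l) tile \<times> ('a,'l) tile"
type_synonym ('a,'l) dpclass = "('a,'l) dpp set"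

definition dpp_tr :: "'a::euclidean_space \<Rightarrow> ('a,'l) dpp \<Rightarrow> ('a,'l) dpp" where
  "dpp_tr v p = (case p of (M,x,y) \<Rightarrow> (tile_tr v ` M, tile_tr v x, tile_tr v y))"

definition dpcls :: "('a::euclidean_space,'l) dpp \<Rightarrow> ('a,'l) dpclass" where
  "dpcls p = range (\<lambda>v. dpp_tr v p)"

definition MII :: "('a::euclidean_space,'l) tile set \<Rightarrow> ('a,'l) dpclass set" where
  "MII T = {dpcls (M,x,y) | M x y. finite M \<and> M \<subseteq> T \<and> x \<in> M \<and> y \<in> M}"

definition dp_le :: "('a::euclidean_space,'l) dpclass \<Rightarrow> ('a,'l) dpclass \<Rightarrow> bool" where
  "dp_le c c' \<longleftrightarrow> (\<exists>(M,x1,x2)\<in>c. \<exists>(N,y1,y2)\<in>c'. M \<subseteq> N \<and> x1 = y1 \<and> x2 = y2)"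

definition prod_cands :: "('a::euclidean_space,'l) tile set \<Rightarrow> ('a,'l) dpclass \<Rightarrow> ('a,'l) dpclass \<Rightarrow> ('a,'l) dpclass set" where
  "prod_cands T c c' = {e \<in> MII T. \<exists>(L,z1,z2)\<in>e. \<exists>z\<in>L.
        dp_le c (dpcls (L,z1,z)) \<and> dp_le c' (dpcls (L,z,z2))}"

definition is_prod :: "('a::euclidean_space,'l) tile set \<Rightarrow> ('a,'l) dpclass \<Rightarrow> ('a,'l) dpclass \<Rightarrow> ('a,'l) dpclass \<Rightarrow> bool" where
  "is_prod T c c' e \<longleftrightarrow> e \<in> prod_cands T c c' \<and> (\<forall>e'\<in>prod_cands T c c'. dp_le e e')"

definition composable :: "('a::euclidean_space,'l) tile set \<Rightarrow> ('a,'l) dpclass \<Rightarrow> ('a,'l) dpclass \<Rightarrow> bool" where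
  "composable T c c' \<longleftrightarrow> (\<exists>e. is_prod T c c' e)"

definition dprod :: "('a::euclidean_space,'l) tile set \<Rightarrow> ('a,'l) dpclass \<Rightarrow> ('a,'l) dpclass \<Rightarrow> ('a,'l) dpclass" where
  "dprod T c c' = (THE e. is_prod T c c' e)"

definition dpinv :: "('a::euclidean_space,'l) dpclass \<Rightarrow> ('a,'l) dpclass" where
  "dpinv c = (\<lambda>(M,x,y). (M,y,x)) ` c"

definition dp_unit :: "('a::euclidean_space,'l) tile set \<Rightarrow> ('a,'l) dpclass \<Rightarrow> bool" where
  "dp_unit T u \<longleftrightarrow> u \<in> MII T \<and> (\<exists>(M,x,y)\<in>u. x = y)"

definition Rc :: "('a::euclidean_space,'l) tile set \<Rightarrow> ('a,'l) dpclass \<Rightarrow> ('a,'l) dpclass" where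
  "Rc T c = dprod T (dpinv c) c"

definition rad :: "('a::euclidean_space,'l) dpclass \<Rightarrow> real" where
  "rad u = Sup {r. \<exists>(M,x,y)\<in>u. \<forall>p\<in>fst x. cball p r \<subseteq> \<Union>(fst ` M)}"

definition sub_almost_groupoid :: "('a::euclidean_space,'l) tile set \<Rightarrow> ('a,'l) dpclass set \<Rightarrow> bool" where
  "sub_almost_groupoid T N \<longleftrightarrow> N \<subseteq> MII T \<and> (\<forall>c\<in>N. dpinv c \<in> N) \<and>
     (\<forall>c\<in>N. \<forall>c'\<in>N. composable T c c' \<longrightarrow> dprod T c c' \<in> N)"

type_synonym ('a,'l) ptiling = "('a,'l) tile set \<times> ('a,'l) tile"

definition is_ptiling :: "('a::euclidean_space,'l) ptiling \<Rightarrow> bool" where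
  "is_ptiling \<omega> \<longleftrightarrow> is_tiling (fst \<omega>) \<and> snd \<omega> \<in> fst \<omega>"

definition patch :: "('a::euclidean_space,'l) ptiling \<Rightarrow> real \<Rightarrow> ('a,'l) tile set" where
  "patch \<omega> r = {s \<in> fst \<omega>. \<exists>p\<in>fst (snd \<omega>). \<exists>q\<in>fst s. dist p q \<le> r}"

definition agree :: "('a::euclidean_space,'l) ptiling \<Rightarrow> ('a,'l) ptiling \<Rightarrow> real \<Rightarrow> bool" where
  "agree \<omega> \<omega>' r \<longleftrightarrow> (\<exists>v. tile_tr v ` patch \<omega> r = patch \<omega>' r \<and> tile_tr v (snd \<omega>) = snd \<omega>')"

text \<open>d(\<omega>,\<omega>') = exp(-sup{r : M_r(\<omega>) = M_r(\<omega>')}), with exp(-\<infinity>) = 0 and sup over r \<ge> 0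
  (sup of the empty set read as 0).\<close>
definition hdist :: "('a::euclidean_space,'l) ptiling \<Rightarrow> ('a,'l) ptiling \<Rightarrow> real" where
  "hdist \<omega> \<omega>' = (if \<forall>r\<ge>0. agree \<omega> \<omega>' r then 0
      else exp (- Sup (insert 0 {r. r \<ge> 0 \<and> agree \<omega> \<omega>' r})))"

text \<open>The hull: the completion of {T_x}, realised (as in the paper) by pointed tilings, namely
  the closure of {T_x | x \<in> T} in the space of pointed tilings w.r.t. d.\<close>
definition Hull :: "('a::euclidean_space,'l) tile set \<Rightarrow> ('a,'l) ptiling set" where
  "Hull T = {\<omega>. is_ptiling \<omega> \<and> (\<forall>e>0. \<exists>x\<in>T. hdist \<omega> (T,x) < e)}"

definition hull_top :: "('a::euclidean_space,'l) tile set \<Rightarrow> ('a,'l) ptiling topology" where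
  "hull_top T = topology (\<lambda>S. S \<subseteq> Hull T \<and>
      (\<forall>\<omega>\<in>S. \<exists>e>0. \<forall>\<omega>'\<in>Hull T. hdist \<omega> \<omega>' < e \<longrightarrow> \<omega>' \<in> S))"

definition occurs_at :: "('a::euclidean_space,'l) dpclass \<Rightarrow> ('a,'l) ptiling \<Rightarrow> bool" where
  "occurs_at u \<omega> \<longleftrightarrow> (\<exists>(M,x,y)\<in>u. M \<subseteq> fst \<omega> \<and> x = snd \<omega> \<and> y = snd \<omega>)"

definition Uset :: "('a::euclidean_space,'l) tile set \<Rightarrow> ('a,'l) dpclass \<Rightarrow> ('a,'l) ptiling set" where
  "Uset T u = {\<omega> \<in> Hull T. occurs_at u \<omega>}"

definition OmegaN :: "('a::euclidean_space,'l) tile set \<Rightarrow> ('a,'l) dpclass set \<Rightarrow> ('a,'l) ptiling set" where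
  "OmegaN T N = (\<Union>c\<in>N. Uset T (Rc T c))"

text \<open>u_1 \<cdots> u_k, left-associated (indices shifted to start at 0).\<close>
fun iprod :: "('a::euclidean_space,'l) tile set \<Rightarrow> (nat \<Rightarrow> ('a,'l) dpclass) \<Rightarrow> nat \<Rightarrow> ('a,'l) dpclass" where
  "iprod T u 0 = u 0"
| "iprod T u (Suc k) = dprod T (iprod T u k) (u (Suc k))"

definition approx_seq :: "('a::euclidean_space,'l) tile set \<Rightarrow> (nat \<Rightarrow> ('a,'l) dpclass) \<Rightarrow> bool" where
  "approx_seq T u \<longleftrightarrow> (\<forall>n. dp_unit T (u n)) \<and>
     (\<forall>k. composable T (iprod T u k) (u (Suc k))) \<and>
     filterlim (\<lambda>n. rad (u n)) at_top sequentially"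

definition is_limit :: "(nat \<Rightarrow> ('a::euclidean_space,'l) dpclass) \<Rightarrow> ('a,'l) ptiling \<Rightarrow> bool" where
  "is_limit u \<omega> \<longleftrightarrow> is_ptiling \<omega> \<and> (\<forall>n. occurs_at (u n) \<omega>)"

definition approximating :: "('a::euclidean_space,'l) tile set \<Rightarrow> ('a,'l) dpclass set \<Rightarrow> bool" where
  "approximating T N \<longleftrightarrow> (\<forall>\<omega>\<in>OmegaN T N. \<exists>u. approx_seq T u \<and> (\<forall>n. u n \<in> N) \<and> is_limit u \<omega>)"

end

theory Submission
  imports Defs
begin

text \<open>Each \<open>U\<^sub>u\<close> is open in the hull: an occurrence of the finite patch \<open>u\<close> at \<open>\<omega>\<close> lies in some
  \<open>M\<^sub>r(\<omega>)\<close>, and every \<open>\<omega>'\<close> with \<open>d(\<omega>,\<omega>') < e\<^sup>-\<^sup>r\<close> carries a translate of it. Conversely the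
  \<open>U\<^sub>u\<close> shrink to points: if \<open>u\<close> occurs at \<open>\<omega>\<close> and \<open>\<omega>'\<close> and covers all \<open>r\<close>-balls centred in its
  pointed tile, then, tiles being closures of their interiors with disjoint interiors, every tile
  of \<open>\<omega>\<close> within distance \<open>r' < r\<close> of the pointed tile belongs to the occurrence of \<open>u\<close>, so
  \<open>M\<^sub>r\<^sub>'(\<omega>)\<close> and \<open>M\<^sub>r\<^sub>'(\<omega>')\<close> agree. An approximating sequence at \<open>\<omega>\<close> supplies units of \<open>\<N>\<close> of
  arbitrarily large radius, and units of \<open>\<N>\<close> lie in \<open>\<Omega>\<^sub>\<N>\<close> because \<open>R(u) = u\<close>.\<close>

section \<open>Translation classes and units\<close>

lemma tile_tr_add: "tile_tr v (tile_tr w t) = tile_tr (v + w) t"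
  by (auto simp: tile_tr_def image_image add.assoc)

lemma tile_tr_0 [simp]: "tile_tr 0 t = t"
  by (simp add: tile_tr_def)

lemma inj_tile_tr: "inj (tile_tr v)"
  by (rule injI) (metis add.left_inverse tile_tr_0 tile_tr_add)

lemma fst_tile_tr: "fst (tile_tr v t) = (\<lambda>p. v + p) ` fst t"
  by (simp add: tile_tr_def)

lemma mem_dpcls_iff:
  "(M', x', y') \<in> dpcls (M, x, y) \<longleftrightarrow>
   (\<exists>v. M' = tile_tr v ` M \<and> x' = tile_tr v x \<and> y' = tile_tr v y)"
  by (auto simp: dpcls_def dpp_tr_def)

lemma dpcls_self: "p \<in> dpcls p"
  unfolding dpcls_def by (rule range_eqI[of _ _ 0]) (simp add: dpp_tr_def split: prod.split)

lemma dpcls_eq: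
  assumes "q \<in> dpcls p"
  shows "dpcls q = dpcls p"
proof -
  have dpp_tr_add: "dpp_tr v (dpp_tr w p) = dpp_tr (v + w) p" for v w and p :: "('a, 'l) dpp"
    by (cases p) (auto simp: dpp_tr_def image_image tile_tr_add)
  obtain w where q: "q = dpp_tr w p"
    using assms by (auto simp: dpcls_def)
  have "dpcls q = (\<lambda>v. dpp_tr v p) ` range (\<lambda>v. v + w)"
    unfolding q dpcls_def image_image dpp_tr_add ..
  also have "range (\<lambda>v. v + w) = UNIV"
    by (rule surjI[of _ "\<lambda>v. v - w"]) simp
  finally show ?thesis
    by (simp add: dpcls_def)
qed

lemma MII_eq_dpcls:
  assumes "u \<in> MII T" "q \<in> u"
  shows "u = dpcls q"
  using assms dpcls_eq unfolding MII_def by blast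

lemma MII_translate:
  assumes "u \<in> MII T" "(M, x, y) \<in> u"
  shows "(tile_tr v ` M, tile_tr v x, tile_tr v y) \<in> u"
  using MII_eq_dpcls[OF assms] by (auto simp: mem_dpcls_iff)

lemma MII_members_translates:
  assumes "u \<in> MII T" "(A, a1, a2) \<in> u" "(B, b1, b2) \<in> u"
  obtains v where "B = tile_tr v ` A" "b1 = tile_tr v a1" "b2 = tile_tr v a2"
  using MII_eq_dpcls[OF assms(1,2)] assms(3) by (auto simp: mem_dpcls_iff)

lemma MII_member_finite:
  assumes "u \<in> MII T" "(M, x, y) \<in> u"
  shows "finite M"
proof -
  obtain P a b where "finite P" "(P, a, b) \<in> u"
    using assms(1) dpcls_self unfolding MII_def by blast
  then show ?thesis
    using MII_members_translates[OF assms(1)] assms(2) by (metis finite_imageI)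
qed

lemma MII_members_card_eq:
  assumes "u \<in> MII T" "(A, a1, a2) \<in> u" "(B, b1, b2) \<in> u"
  shows "card B = card A"
  using MII_members_translates[OF assms] inj_tile_tr
  by (metis card_image inj_on_subset subset_UNIV)

lemma dp_le_antisym:
  assumes "e \<in> MII T" "u \<in> MII T" "dp_le e u" "dp_le u e"
  shows "e = u"
proof -
  obtain M x1 x2 N where lo: "(M, x1, x2) \<in> e" "(N, x1, x2) \<in> u" "M \<subseteq> N"
    using assms(3) by (auto simp: dp_le_def)
  obtain M' y1 y2 N' where hi: "(M', y1, y2) \<in> e" "(N', y1, y2) \<in> u" "N' \<subseteq> M'"
    using assms(4) by (auto simp: dp_le_def)
  have "card N = card N'"
    using MII_members_card_eq[OF assms(2) hi(2) lo(2)] .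
  also have "\<dots> \<le> card M'"
    using hi(3) MII_member_finite[OF assms(1) hi(1)] by (rule card_mono[rotated])
  also have "\<dots> = card M"
    using MII_members_card_eq[OF assms(1) lo(1) hi(1)] .
  finally have "M = N"
    using lo(3) MII_member_finite[OF assms(2) lo(2)] by (metis card_mono card_subset_eq le_antisym)
  then show ?thesis
    using MII_eq_dpcls assms(1,2) lo(1,2) by metis
qed

lemma dp_unit_repr:
  assumes "dp_unit T u"
  obtains M x where "finite M" "M \<subseteq> T" "x \<in> M" "u = dpcls (M, x, x)"
proof -
  obtain M x y where u: "u = dpcls (M, x, y)" "finite M" "M \<subseteq> T" "x \<in> M" "y \<in> M"
    using assms by (auto simp: dp_unit_def MII_def)
  obtain M' x' where "(M', x', x') \<in> u"
    using assms by (auto simp: dp_unit_def)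
  then have "x = y"
    using u(1) inj_tile_tr by (auto simp: mem_dpcls_iff dest: injD)
  then show ?thesis
    using that u by blast
qed

lemma dp_unit_member_diag:
  assumes "dp_unit T u" "(M, x, y) \<in> u"
  shows "x = y"
  using assms by (metis dp_unit_repr mem_dpcls_iff)

lemma dp_unit_dp_le_diag:
  assumes "dp_unit T u" "dp_le u (dpcls (L, z1, z2))"
  shows "z1 = z2"
proof -
  obtain M a b N where "(M, a, b) \<in> u" "(N, a, b) \<in> dpcls (L, z1, z2)"
    using assms(2) by (auto simp: dp_le_def)
  then show ?thesis
    using dp_unit_member_diag[OF assms(1)] inj_tile_tr by (metis injD mem_dpcls_iff)
qed

lemma dp_unit_is_prod_self:
  assumes "dp_unit T u"
  shows "is_prod T u u u"
proof -
  obtain M x where Mx: "x \<in> M" "u = dpcls (M, x, x)"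
    using dp_unit_repr[OF assms] by metis
  have u_MII: "u \<in> MII T"
    using assms by (simp add: dp_unit_def)
  have refl: "dp_le u u"
    using dpcls_self[of "(M, x, x)"] Mx(2) unfolding dp_le_def by blast
  have "u \<in> prod_cands T u u"
    unfolding prod_cands_def using u_MII dpcls_self[of "(M, x, x)"] Mx refl by blast
  moreover have "dp_le u e" if cand: "e \<in> prod_cands T u u" for e
  proof -
    obtain L z1 z2 z where L: "e \<in> MII T" "(L, z1, z2) \<in> e"
      "dp_le u (dpcls (L, z1, z))" "dp_le u (dpcls (L, z, z2))"
      using cand unfolding prod_cands_def by blast
    have "z1 = z" "z = z2"
      using dp_unit_dp_le_diag[OF assms] L(3,4) by blast+
    then show ?thesis
      using MII_eq_dpcls[OF L(1,2)] L(3) by simp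
  qed
  ultimately show ?thesis
    by (simp add: is_prod_def)
qed

lemma Rc_dp_unit:
  assumes "dp_unit T u"
  shows "Rc T u = u"
proof -
  have "dpinv u = u"
    unfolding dpinv_def using dp_unit_member_diag[OF assms]
    by (force intro: rev_image_eqI)
  moreover have "dprod T u u = u"
    unfolding dprod_def
  proof (rule the_equality)
    show "is_prod T u u u"
      using dp_unit_is_prod_self[OF assms] .
    fix e assume "is_prod T u u e"
    then show "e = u"
      using dp_unit_is_prod_self[OF assms] assms dp_le_antisym
      unfolding is_prod_def prod_cands_def dp_unit_def by blast
  qed
  ultimately show ?thesis
    by (simp add: Rc_def)
qed

section \<open>Patches and the topology of the hull\<close>

definition tiles_near :: "('a::euclidean_space, 'l) tile set \<Rightarrow> ('a, 'l) tile \<Rightarrow> real \<Rightarrow> ('a, 'l) tile set" where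
  "tiles_near A x r = {s \<in> A. \<exists>p\<in>fst x. \<exists>q\<in>fst s. dist p q \<le> r}"

lemma patch_eq_tiles_near: "patch \<omega> r = tiles_near (fst \<omega>) (snd \<omega>) r"
  by (simp add: patch_def tiles_near_def)

lemma tiles_near_tiles_near:
  "r \<le> r' \<Longrightarrow> tiles_near (tiles_near A x r') x r = tiles_near A x r"
  using order_trans by (fastforce simp: tiles_near_def)

lemma near_tile_tr_iff:
  "(\<exists>p\<in>fst (tile_tr v x). \<exists>q\<in>fst (tile_tr v s). dist p q \<le> r) \<longleftrightarrow>
   (\<exists>p\<in>fst x. \<exists>q\<in>fst s. dist p q \<le> r)"
  unfolding fst_tile_tr by (simp add: dist_norm)

lemma tiles_near_tile_tr:
  "tile_tr v ` tiles_near A x r = tiles_near (tile_tr v ` A) (tile_tr v x) r"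
proof -
  have "tiles_near (tile_tr v ` A) (tile_tr v x) r =
    tile_tr v ` {s \<in> A. \<exists>p\<in>fst (tile_tr v x). \<exists>q\<in>fst (tile_tr v s). dist p q \<le> r}"
    unfolding tiles_near_def by blast
  then show ?thesis
    by (simp add: near_tile_tr_iff tiles_near_def)
qed

lemma agree_mono:
  assumes "agree \<omega> \<omega>' r'" "r \<le> r'"
  shows "agree \<omega> \<omega>' r"
proof -
  obtain v where v: "tile_tr v ` patch \<omega> r' = patch \<omega>' r'" "tile_tr v (snd \<omega>) = snd \<omega>'"
    using assms(1) unfolding agree_def by blast
  have "tile_tr v ` patch \<omega> r = tile_tr v ` tiles_near (patch \<omega> r') (snd \<omega>) r"
    using assms(2) by (simp add: patch_eq_tiles_near tiles_near_tiles_near)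
  also have "\<dots> = tiles_near (patch \<omega>' r') (snd \<omega>') r"
    by (simp add: tiles_near_tile_tr v)
  also have "\<dots> = patch \<omega>' r"
    using assms(2) by (simp add: patch_eq_tiles_near tiles_near_tiles_near)
  finally show ?thesis
    using v(2) unfolding agree_def by blast
qed

lemma bdd_above_agree_radii:
  assumes "\<not> agree \<omega> \<omega>' r0" "r0 \<ge> 0"
  shows "bdd_above (insert 0 {r. r \<ge> 0 \<and> agree \<omega> \<omega>' r})"
proof (rule bdd_aboveI[of _ r0])
  fix r assume "r \<in> insert 0 {r. r \<ge> 0 \<and> agree \<omega> \<omega>' r}"
  then show "r \<le> r0"
    using assms agree_mono[of \<omega> \<omega>' r r0] by fastforce
qed

lemma agree_if_hdist_less:
  assumes "hdist \<omega> \<omega>' < exp (- r)" "r \<ge> 0"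
  shows "agree \<omega> \<omega>' r"
proof (cases "\<forall>r\<ge>0. agree \<omega> \<omega>' r")
  case False
  define X where "X = insert 0 {r. r \<ge> 0 \<and> agree \<omega> \<omega>' r}"
  have "bdd_above X"
    using False bdd_above_agree_radii unfolding X_def by metis
  moreover have "r < Sup X"
    using assms False unfolding hdist_def X_def by simp
  ultimately obtain r' where "r' \<in> X" "r < r'"
    using less_cSup_iff[of X r] unfolding X_def by blast
  then show ?thesis
    using assms(2) agree_mono[of \<omega> \<omega>' r' r] unfolding X_def by auto
qed (use assms in blast)

lemma hdist_le_if_agree:
  assumes "agree \<omega> \<omega>' r" "r \<ge> 0"
  shows "hdist \<omega> \<omega>' \<le> exp (- r)"
proof (cases "\<forall>r\<ge>0. agree \<omega> \<omega>' r")
  case False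
  define X where "X = insert 0 {r. r \<ge> 0 \<and> agree \<omega> \<omega>' r}"
  have "r \<le> Sup X"
    using False bdd_above_agree_radii assms unfolding X_def by (metis cSup_upper insertCI mem_Collect_eq)
  then show ?thesis
    using False unfolding hdist_def X_def by simp
qed (simp add: hdist_def)

lemma istopology_neighbourhoods:
  fixes d :: "'b \<Rightarrow> 'b \<Rightarrow> real"
  shows "istopology (\<lambda>S. S \<subseteq> H \<and> (\<forall>x\<in>S. \<exists>e>0. \<forall>y\<in>H. d x y < e \<longrightarrow> y \<in> S))"
proof -
  have "\<exists>e>0. \<forall>y\<in>H. d x y < e \<longrightarrow> y \<in> S \<inter> S'"
    if "\<exists>e>0. \<forall>y\<in>H. d x y < e \<longrightarrow> y \<in> S" "\<exists>e>0. \<forall>y\<in>H. d x y < e \<longrightarrow> y \<in> S'" for x S S'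
    using that by (metis IntI min_less_iff_conj)
  then show ?thesis
    unfolding istopology_def by (simp add: subset_iff) (meson UnionI)
qed

lemma openin_hull_top:
  "openin (hull_top T) S \<longleftrightarrow>
     S \<subseteq> Hull T \<and> (\<forall>\<omega>\<in>S. \<exists>e>0. \<forall>\<omega>'\<in>Hull T. hdist \<omega> \<omega>' < e \<longrightarrow> \<omega>' \<in> S)"
  unfolding hull_top_def topology_inverse'[OF istopology_neighbourhoods] ..

lemma topology_generated_by_base:
  assumes "\<And>B. B \<in> \<B> \<Longrightarrow> openin X B"
    and "\<And>U x. openin X U \<Longrightarrow> x \<in> U \<Longrightarrow> \<exists>B\<in>\<B>. x \<in> B \<and> B \<subseteq> U"
  shows "topology_generated_by \<B> = X"
proof -
  have "generate_topology_on \<B> U \<longleftrightarrow> openin X U" for U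
  proof
    assume "generate_topology_on \<B> U"
    then show "openin X U"
      using generate_topology_on_coarsest[of "openin X" \<B> U] assms(1) by simp
  next
    assume "openin X U"
    then have "U = \<Union>{B \<in> \<B>. B \<subseteq> U}"
      using assms(2) by blast
    then show "generate_topology_on \<B> U"
      by (metis (mono_tags, lifting) generate_topology_on.UN generate_topology_on.Basis mem_Collect_eq)
  qed
  then show ?thesis
    by (simp add: topology_eq openin_topology_generated_by_iff)
qed

section \<open>Patches determined by an occurrence of a covering pattern\<close>

lemma is_tilingD:
  assumes "is_tiling W" "t \<in> W"
  shows "fst t \<noteq> {}" "closed (fst t)" "closure (interior (fst t)) = fst t"
  using assms by (auto simp: is_tiling_def)

lemma is_tiling_interiors_disjoint:
  assumes "is_tiling W" "t \<in> W" "t' \<in> W" "interior (fst t) \<inter> interior (fst t') \<noteq> {}"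
  shows "t = t'"
  using assms unfolding is_tiling_def by blast

lemma finite_closed_cover_meets_interior:
  assumes "finite \<F>" "\<forall>C\<in>\<F>. closed C" "open U" "U \<noteq> {}" "U \<subseteq> \<Union>\<F>"
  shows "\<exists>C\<in>\<F>. interior C \<inter> U \<noteq> {}"
  using assms
proof (induction \<F> arbitrary: U rule: finite_induct)
  case (insert C \<F>)
  show ?case
  proof (cases "U \<subseteq> C")
    case True
    then have "U \<subseteq> interior C"
      using insert.prems(2) by (simp add: interior_maximal)
    then show ?thesis
      using insert.prems(3) by blast
  next
    case False
    then have "\<exists>C'\<in>\<F>. interior C' \<inter> (U - C) \<noteq> {}"
      using insert by (intro insert.IH) (auto simp: open_Diff)
    then show ?thesis
      by blast
  qed
qed simp

lemma patch_eq_tiles_near_cover: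
  assumes \<omega>: "is_ptiling \<omega>" and M: "M \<subseteq> fst \<omega>" "finite M"
    and cover: "\<forall>p\<in>fst (snd \<omega>). cball p r \<subseteq> \<Union>(fst ` M)" and "r' < r"
  shows "patch \<omega> r' = tiles_near M (snd \<omega>) r'"
proof
  show "tiles_near M (snd \<omega>) r' \<subseteq> patch \<omega> r'"
    using M(1) by (auto simp: patch_eq_tiles_near tiles_near_def)
next
  have tiling: "is_tiling (fst \<omega>)"
    using \<omega> by (simp add: is_ptiling_def)
  show "patch \<omega> r' \<subseteq> tiles_near M (snd \<omega>) r'"
  proof
    fix s assume "s \<in> patch \<omega> r'"
    then obtain p q where s: "s \<in> fst \<omega>" "p \<in> fst (snd \<omega>)" "q \<in> fst s" "dist p q \<le> r'"
      unfolding patch_def by blast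
    \<comment> \<open>a tile is the closure of its interior, so its interior reaches into the open ball\<close>
    have "q \<in> closure (interior (fst s))" "q \<in> ball p r"
      using is_tilingD(3)[OF tiling s(1)] s(3,4) \<open>r' < r\<close> by auto
    then have "ball p r \<inter> interior (fst s) \<noteq> {}"
      using open_Int_closure_eq_empty[of "ball p r" "interior (fst s)"] by blast
    moreover have "ball p r \<inter> interior (fst s) \<subseteq> \<Union>(fst ` M)"
      using cover s(2) ball_subset_cball by blast
    moreover have "\<forall>C\<in>fst ` M. closed C"
      using is_tilingD(2)[OF tiling] M(1) by blast
    moreover have "open (ball p r \<inter> interior (fst s))"
      by (simp add: open_Int)
    ultimately obtain m where m: "m \<in> M" "interior (fst m) \<inter> (ball p r \<inter> interior (fst s)) \<noteq> {}"
      using finite_closed_cover_meets_interior[of "fst ` M" "ball p r \<inter> interior (fst s)"] M(2)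
      by blast
    then have "s = m"
      using is_tiling_interiors_disjoint[OF tiling, of m s] M(1) s(1) by blast
    then show "s \<in> tiles_near M (snd \<omega>) r'"
      using m(1) s by (auto simp: tiles_near_def)
  qed
qed

lemma cball_cover_tile_tr:
  assumes "\<forall>p\<in>fst x. cball p r \<subseteq> \<Union>(fst ` M)"
  shows "\<forall>p\<in>fst (tile_tr v x). cball p r \<subseteq> \<Union>(fst ` tile_tr v ` M)"
proof
  fix p' assume "p' \<in> fst (tile_tr v x)"
  then obtain p where p: "p \<in> fst x" "p' = v + p"
    unfolding fst_tile_tr by blast
  have "cball p' r = (\<lambda>q. v + q) ` cball p r"
    using p(2) cball_translation by blast
  also have "\<dots> \<subseteq> (\<lambda>q. v + q) ` \<Union>(fst ` M)"
    using assms p(1) by blast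
  also have "\<dots> = \<Union>(fst ` tile_tr v ` M)"
    unfolding image_Union image_image fst_tile_tr ..
  finally show "cball p' r \<subseteq> \<Union>(fst ` tile_tr v ` M)" .
qed

lemma patch_eq_translated_cover:
  assumes "is_ptiling \<omega>" "finite M" "\<forall>p\<in>fst x. cball p r \<subseteq> \<Union>(fst ` M)" "r' < r"
    and "tile_tr a ` M \<subseteq> fst \<omega>" "snd \<omega> = tile_tr a x"
  shows "patch \<omega> r' = tile_tr a ` tiles_near M x r'"
proof -
  have "patch \<omega> r' = tiles_near (tile_tr a ` M) (snd \<omega>) r'"
    using cball_cover_tile_tr[OF assms(3), of a] assms(2,4,6)
    by (intro patch_eq_tiles_near_cover[OF assms(1,5)]) auto
  then show ?thesis
    by (simp add: assms(6) tiles_near_tile_tr)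
qed

lemma agree_if_cover_occurs:
  assumes "is_ptiling \<omega>" "is_ptiling \<omega>'"
    and "finite M" "\<forall>p\<in>fst x. cball p r \<subseteq> \<Union>(fst ` M)" "r' < r"
    and "tile_tr a ` M \<subseteq> fst \<omega>" "snd \<omega> = tile_tr a x"
    and "tile_tr b ` M \<subseteq> fst \<omega>'" "snd \<omega>' = tile_tr b x"
  shows "agree \<omega> \<omega>' r'"
proof -
  have "tile_tr (b - a) ` patch \<omega> r' = patch \<omega>' r'"
    using patch_eq_translated_cover[OF assms(1,3-7)] patch_eq_translated_cover[OF assms(2,3-5,8,9)]
    by (simp add: image_image tile_tr_add)
  moreover have "tile_tr (b - a) (snd \<omega>) = snd \<omega>'"
    using assms(7,9) by (simp add: tile_tr_add)
  ultimately show ?thesis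
    unfolding agree_def by blast
qed

lemma finite_subset_patch:
  assumes \<omega>: "is_ptiling \<omega>" and M: "finite M" "M \<subseteq> fst \<omega>"
  obtains r where "r \<ge> 0" "M \<subseteq> patch \<omega> r"
proof -
  have tiling: "is_tiling (fst \<omega>)" and "snd \<omega> \<in> fst \<omega>"
    using \<omega> by (simp_all add: is_ptiling_def)
  then obtain p where p: "p \<in> fst (snd \<omega>)"
    using is_tilingD(1) by blast
  define q where "q m = (SOME q. q \<in> fst m)" for m :: "('a, 'b) tile"
  have q: "q m \<in> fst m" if "m \<in> M" for m
  proof -
    have "fst m \<noteq> {}"
      using is_tilingD(1)[OF tiling] that M(2) by blast
    then show ?thesis
      by (simp add: q_def some_in_eq)
  qed
  define r where "r = (\<Sum>m\<in>M. dist p (q m))"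
  have "M \<subseteq> patch \<omega> r"
  proof
    fix m assume m: "m \<in> M"
    have "dist p (q m) \<le> r"
      unfolding r_def by (rule member_le_sum[OF m _ M(1)]) simp
    then show "m \<in> patch \<omega> r"
      unfolding patch_def using m M(2) p q[OF m] by blast
  qed
  moreover have "r \<ge> 0"
    unfolding r_def by (simp add: sum_nonneg)
  ultimately show ?thesis
    using that by blast
qed

section \<open>The sets \<open>U\<^sub>u\<close>\<close>

lemma Uset_open:
  assumes u: "u \<in> MII T"
  shows "openin (hull_top T) (Uset T u)"
  unfolding openin_hull_top
proof (intro conjI ballI)
  show "Uset T u \<subseteq> Hull T"
    unfolding Uset_def by blast
next
  fix \<omega> assume "\<omega> \<in> Uset T u"
  then obtain M where M: "(M, snd \<omega>, snd \<omega>) \<in> u" "M \<subseteq> fst \<omega>" and "is_ptiling \<omega>"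
    unfolding Uset_def Hull_def occurs_at_def by blast
  then obtain r where r: "r \<ge> 0" "M \<subseteq> patch \<omega> r"
    using finite_subset_patch MII_member_finite[OF u] by metis
  have "\<omega>' \<in> Uset T u" if \<omega>': "\<omega>' \<in> Hull T" "hdist \<omega> \<omega>' < exp (- r)" for \<omega>'
  proof -
    obtain v where v: "tile_tr v ` patch \<omega> r = patch \<omega>' r" "tile_tr v (snd \<omega>) = snd \<omega>'"
      using agree_if_hdist_less[OF \<omega>'(2) r(1)] unfolding agree_def by blast
    have "(tile_tr v ` M, snd \<omega>', snd \<omega>') \<in> u"
      using MII_translate[OF u M(1), of v] v(2) by simp
    moreover have "tile_tr v ` M \<subseteq> fst \<omega>'"
      using r(2) v(1) unfolding patch_def by blast
    ultimately show ?thesis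
      using \<omega>'(1) unfolding Uset_def occurs_at_def by blast
  qed
  then show "\<exists>e>0. \<forall>\<omega>'\<in>Hull T. hdist \<omega> \<omega>' < e \<longrightarrow> \<omega>' \<in> Uset T u"
    by (meson exp_gt_zero)
qed

lemma Uset_subset_OmegaN:
  assumes "dp_unit T u" "u \<in> N"
  shows "Uset T u \<subseteq> OmegaN T N"
  using assms Rc_dp_unit unfolding OmegaN_def by fastforce

lemma rad_less_witness:
  assumes "u \<noteq> {}" "R < rad u"
  shows "\<exists>r>R. \<exists>(M, x, y)\<in>u. \<forall>p\<in>fst x. cball p r \<subseteq> \<Union>(fst ` M)"
proof -
  define X where "X = {r. \<exists>(M, x, y)\<in>u. \<forall>p\<in>fst x. cball p r \<subseteq> \<Union>(fst ` M)}"
  \<comment> \<open>negative radii give empty balls\<close>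
  have "-1 \<in> X"
    using assms(1) unfolding X_def by auto
  have "\<exists>r\<in>X. R < r"
  proof (cases "bdd_above X")
    case True
    then show ?thesis
      using assms(2) less_cSup_iff[of X R] \<open>-1 \<in> X\<close> unfolding rad_def X_def[symmetric] by blast
  qed (meson bdd_above_def not_le)
  then show ?thesis
    unfolding X_def by blast
qed

lemma hdist_le_on_Uset:
  assumes u: "u \<in> MII T" and "R < rad u" "R \<ge> 0" and \<omega>: "\<omega> \<in> Uset T u" "\<omega>' \<in> Uset T u"
  shows "hdist \<omega> \<omega>' \<le> exp (- R)"
proof -
  obtain M1 M2 where M1: "(M1, snd \<omega>, snd \<omega>) \<in> u" "M1 \<subseteq> fst \<omega>" "is_ptiling \<omega>"
    and M2: "(M2, snd \<omega>', snd \<omega>') \<in> u" "M2 \<subseteq> fst \<omega>'" "is_ptiling \<omega>'"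
    using \<omega> unfolding Uset_def Hull_def occurs_at_def by blast
  then obtain r M x y where r: "r > R" "(M, x, y) \<in> u" "\<forall>p\<in>fst x. cball p r \<subseteq> \<Union>(fst ` M)"
    using rad_less_witness[OF _ \<open>R < rad u\<close>] by blast
  obtain a b where "M1 = tile_tr a ` M" "snd \<omega> = tile_tr a x"
    "M2 = tile_tr b ` M" "snd \<omega>' = tile_tr b x"
    using MII_members_translates[OF u r(2)] M1(1) M2(1) by metis
  then have "agree \<omega> \<omega>' R"
    using agree_if_cover_occurs[OF M1(3) M2(3) MII_member_finite[OF u r(2)] r(3) r(1)] M1(2) M2(2)
    by blast
  then show ?thesis
    using hdist_le_if_agree \<open>R \<ge> 0\<close> by blast
qed

lemma approximating_Uset_hdist_less:
  assumes "approximating T N" "\<omega> \<in> OmegaN T N" "e > 0"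
  obtains u where "u \<in> N" "dp_unit T u" "\<omega> \<in> Uset T u" "\<And>\<omega>'. \<omega>' \<in> Uset T u \<Longrightarrow> hdist \<omega> \<omega>' < e"
proof -
  obtain u where u: "approx_seq T u" "\<And>n. u n \<in> N" "is_limit u \<omega>"
    using assms(1,2) unfolding approximating_def by blast
  define R where "R = \<bar>ln e\<bar> + 1"
  have "\<forall>\<^sub>F n in sequentially. R < rad (u n)"
    using u(1) unfolding approx_seq_def by (simp add: filterlim_at_top_dense)
  then obtain n where n: "R < rad (u n)"
    by (meson eventually_sequentially order.refl)
  have unit: "dp_unit T (u n)"
    using u(1) unfolding approx_seq_def by blast
  then have "u n \<in> MII T"
    by (simp add: dp_unit_def)
  have \<omega>: "\<omega> \<in> Uset T (u n)"
    using u(3) assms(2) unfolding is_limit_def Uset_def OmegaN_def by blast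
  have "- R < ln e"
    unfolding R_def by linarith
  then have "exp (- R) < e"
    using assms(3) by (metis exp_less_cancel_iff exp_ln)
  moreover have "R \<ge> 0"
    unfolding R_def by simp
  ultimately have "hdist \<omega> \<omega>' < e" if "\<omega>' \<in> Uset T (u n)" for \<omega>'
    using hdist_le_on_Uset[OF \<open>u n \<in> MII T\<close> n _ \<omega> that] by fastforce
  then show ?thesis
    using that u(2) unit \<omega> by blast
qed

lemma Uset_openin_OmegaN:
  assumes "dp_unit T u" "u \<in> N"
  shows "openin (subtopology (hull_top T) (OmegaN T N)) (Uset T u)"
proof -
  have "openin (subtopology (hull_top T) (OmegaN T N)) (Uset T u \<inter> OmegaN T N)"
    using assms(1) by (intro openin_subtopology_Int Uset_open) (simp add: dp_unit_def)
  then show ?thesis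
    using Uset_subset_OmegaN[OF assms] by (simp add: Int_absorb2)
qed

lemma approximating_Uset_nhd:
  assumes "approximating T N" "openin (subtopology (hull_top T) (OmegaN T N)) U" "\<omega> \<in> U"
  obtains u where "u \<in> N" "dp_unit T u" "\<omega> \<in> Uset T u" "Uset T u \<subseteq> U"
proof -
  obtain W where W: "openin (hull_top T) W" "U = W \<inter> OmegaN T N" "\<omega> \<in> W" "\<omega> \<in> OmegaN T N"
    using assms(2,3) unfolding openin_subtopology by blast
  then obtain e where e: "e > 0" "\<And>\<omega>'. \<omega>' \<in> Hull T \<Longrightarrow> hdist \<omega> \<omega>' < e \<Longrightarrow> \<omega>' \<in> W"
    unfolding openin_hull_top by blast
  obtain u where u: "u \<in> N" "dp_unit T u" "\<omega> \<in> Uset T u"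
    and small: "\<And>\<omega>'. \<omega>' \<in> Uset T u \<Longrightarrow> hdist \<omega> \<omega>' < e"
    using approximating_Uset_hdist_less[OF assms(1) W(4) e(1)] by blast
  have "Uset T u \<subseteq> W"
    using e(2) small unfolding Uset_def by blast
  then have "Uset T u \<subseteq> U"
    using W(2) Uset_subset_OmegaN[OF u(2,1)] by blast
  then show ?thesis
    by (rule that[OF u])
qed

theorem mainTheorem11:
  fixes T :: "('a::euclidean_space, 'l) tile set"
    and N :: "('a, 'l) dpclass set"
  assumes "is_tiling T" and "flc T"
    and "sub_almost_groupoid T N" and "approximating T N"
  shows "subtopology (hull_top T) (OmegaN T N) =
         topology_generated_by {Uset T u | u. u \<in> N \<and> dp_unit T u}"
proof (rule topology_generated_by_base[symmetric])
  fix B assume "B \<in> {Uset T u | u. u \<in> N \<and> dp_unit T u}"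
  then show "openin (subtopology (hull_top T) (OmegaN T N)) B"
    using Uset_openin_OmegaN by blast
next
  fix U \<omega> assume "openin (subtopology (hull_top T) (OmegaN T N)) U" "\<omega> \<in> U"
  then obtain u where "u \<in> N" "dp_unit T u" "\<omega> \<in> Uset T u" "Uset T u \<subseteq> U"
    by (rule approximating_Uset_nhd[OF assms(4)])
  then show "\<exists>B\<in>{Uset T u | u. u \<in> N \<and> dp_unit T u}. \<omega> \<in> B \<and> B \<subseteq> U"
    by blast
qed

end
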